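(* Let $n\ge1$, $p\in[0,1)$, and let $\mathcal{D}(\rho)=(1-p)\rho+p\,\mathbb{I}/2^n$ be the $n$-qubit global depolarizing channel. Consider Probabilistic Error Cancellation using the optimal quasiprobability decomposition $$\mathcal{D}^{-1}=\Big(1+\frac{(2^{2n}-1)p}{2^{2n}(1-p)}\Big)\mathrm{id}-\sum_{i=1}^{2^{2n}-1}\frac{p}{2^{2n}(1-p)}\mathcal{P}_i,$$ where $\mathcal{P}_i(\rho)=P_i\rho P_i$ ranges over the non-identity $n$-qubit Pauli strings $P_i$, with error mitigation cost $\gamma$ equal to the sum of the squares of the coefficients in this decomposition, and assume perfect correction so that mitigated cost differences equal noise-free cost differences $\Delta C$ while noisy cost differences are $\Delta\widetilde{C}=(1-p)\Delta C$. Then, for any pair of points on the cost landscape with $\Delta C\ne0$, the relative resolvability $\chi_{depol}=\frac{1}{\gamma}\big(\frac{\Delta C}{\Delta\widetilde{C}}\big)^2$ satisfies $$\chi_{depol}=\frac{2^{2n}}{2^{2n}-p(2-p)}\ge1.$$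
   Context: Relative resolvability $\chi=\frac{1}{\gamma}(\Delta C_m/\Delta\widetilde{C})^2$ compares shots needed to resolve two cost values with and without mitigation; $\gamma$ is the error mitigation cost. *)

theory Defs
  imports Complex_Main
begin

text \<open>Coefficients of the quasiprobability decomposition of the inverse of the
  n-qubit global depolarizing channel with parameter p. Index 0 is the identity
  channel; indices 1 .. 4^n - 1 are the non-identity Pauli channels.\<close>
definition pec_coeff :: "nat \<Rightarrow> real \<Rightarrow> nat \<Rightarrow> real" where
  "pec_coeff n p i =
     (if i = 0 then 1 + ((2::real)^(2*n) - 1) * p / ((2::real)^(2*n) * (1 - p))
      else - (p / ((2::real)^(2*n) * (1 - p))))"

definition pec_cost :: "nat \<Rightarrow> real \<Rightarrow> real" where
  "pec_cost n p = (\<Sum>i\<in>{0..<2^(2*n)}. (pec_coeff n p i)^2)"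

definition rel_resolvability :: "real \<Rightarrow> real \<Rightarrow> real \<Rightarrow> real" where
  "rel_resolvability \<gamma> dCm dCnoisy = (1 / \<gamma>) * (dCm / dCnoisy)^2"

end

theory Submission
  imports Defs
begin

text \<open>Perfect correction restores the signal lost to the factor \<open>1 - p\<close>, so
  \<open>\<chi> = 1 / (\<gamma> (1 - p)\<^sup>2)\<close>. With \<open>N = 2\<^sup>2\<^sup>n\<close> and the non-identity coefficient
  \<open>-b\<close>, \<open>b = p / (N (1 - p))\<close>, the identity coefficient is \<open>1 + (N - 1) b\<close>; after
  scaling by \<open>1 - p\<close> these become \<open>1 - p/N\<close> and \<open>p/N\<close>, whence
  \<open>\<gamma> (1 - p)\<^sup>2 = (1 - p/N)\<^sup>2 + (N - 1) (p/N)\<^sup>2 = 1 - p (2 - p) / N \<le> 1\<close>.\<close>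

lemma pec_cost_eq:
  "pec_cost n p = (pec_coeff n p 0)\<^sup>2 + ((2::real)^(2*n) - 1) * (p / ((2::real)^(2*n) * (1 - p)))\<^sup>2"
proof -
  have "pec_cost n p = (pec_coeff n p 0)\<^sup>2 + (\<Sum>i\<in>{1..<2^(2*n)}. (pec_coeff n p i)\<^sup>2)"
    unfolding pec_cost_def by (simp add: sum.atLeast_Suc_lessThan)
  also have "(\<Sum>i\<in>{1..<2^(2*n)}. (pec_coeff n p i)\<^sup>2)
      = (\<Sum>i\<in>{1..<2^(2*n)::nat}. (p / ((2::real)^(2*n) * (1 - p)))\<^sup>2)"
    by (rule sum.cong) (auto simp: pec_coeff_def)
  also have "\<dots> = ((2::real)^(2*n) - 1) * (p / ((2::real)^(2*n) * (1 - p)))\<^sup>2"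
    by (simp add: of_nat_diff)
  finally show ?thesis .
qed

lemma pec_cost_mult_square:
  assumes "p \<noteq> 1"
  shows "pec_cost n p * (1 - p)\<^sup>2 = 1 - p * (2 - p) / (2::real)^(2*n)"
proof -
  define N :: real where "N = 2^(2*n)"
  have "N > 0" unfolding N_def by simp
  have scaled_coeff: "p / (N * (1 - p)) * (1 - p) = p / N"
    using assms \<open>N > 0\<close> by (simp add: field_simps)
  have "pec_coeff n p 0 = 1 + (N - 1) * (p / (N * (1 - p)))"
    by (simp add: pec_coeff_def N_def)
  then have scaled_coeff0: "pec_coeff n p 0 * (1 - p) = 1 - p / N"
    using assms \<open>N > 0\<close> by (simp add: field_simps)
  have "pec_cost n p * (1 - p)\<^sup>2
      = ((pec_coeff n p 0)\<^sup>2 + (N - 1) * (p / (N * (1 - p)))\<^sup>2) * (1 - p)\<^sup>2"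
    by (simp add: pec_cost_eq N_def)
  also have "\<dots> = (pec_coeff n p 0 * (1 - p))\<^sup>2 + (N - 1) * (p / (N * (1 - p)) * (1 - p))\<^sup>2"
    by (simp only: power_mult_distrib distrib_right mult.assoc)
  also have "\<dots> = (1 - p / N)\<^sup>2 + (N - 1) * (p / N)\<^sup>2"
    by (simp only: scaled_coeff scaled_coeff0)
  also have "\<dots> = 1 - p * (2 - p) / N"
    using \<open>N > 0\<close> by (simp add: field_simps power2_eq_square)
  finally show ?thesis unfolding N_def .
qed

lemma rel_resolvability_scaled:
  assumes "dC \<noteq> 0"
  shows "rel_resolvability \<gamma> dC (c * dC) = 1 / (\<gamma> * c\<^sup>2)"
  using assms by (simp add: rel_resolvability_def power_divide)

theorem proposition5:
  fixes n :: nat and p dC dCnoisy :: real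
  assumes "n \<ge> 1" and "0 \<le> p" and "p < 1"
    and "dC \<noteq> 0"
    and "dCnoisy = (1 - p) * dC"
  shows "rel_resolvability (pec_cost n p) dC dCnoisy
           = (2::real)^(2*n) / ((2::real)^(2*n) - p * (2 - p))
       \<and> rel_resolvability (pec_cost n p) dC dCnoisy \<ge> 1"
proof -
  define N :: real where "N = 2^(2*n)"
  have "N \<ge> 1" unfolding N_def by simp
  have "p * (2 - p) = 1 - (1 - p)\<^sup>2"
    by (simp add: power2_eq_square algebra_simps)
  then have "0 \<le> p * (2 - p)" "p * (2 - p) < 1"
    using assms(2,3) power_le_one[of "1 - p" 2] by simp_all
  then have gap: "0 \<le> p * (2 - p)" "p * (2 - p) < N" using \<open>N \<ge> 1\<close> by auto
  have "rel_resolvability (pec_cost n p) dC dCnoisy = 1 / (1 - p * (2 - p) / N)"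
    using assms(3-5) by (simp add: rel_resolvability_scaled pec_cost_mult_square N_def)
  also have "\<dots> = N / (N - p * (2 - p))"
    using \<open>N \<ge> 1\<close> by (simp add: field_simps)
  finally show ?thesis using gap by (simp add: N_def)
qed

end
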